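(* Let $(\Omega,\mathcal{F})$ be a measurable space, $\mathcal{P}$ a nonempty set of probability measures on it, $\hat{\mathbb{E}}[Z]=\sup_{P\in\mathcal{P}}E_P[Z]$, and let $X,Y$ be random variables with $\hat{\mathbb{E}}[X^2]+\hat{\mathbb{E}}[Y^2]<\infty$. Then (1) $\overline{V}(X+Y)\le\overline{V}(X)+\overline{V}(Y)+2\overline{C}(X,Y)$; (2) $\underline{V}(X+Y)\ge\underline{V}(X)+\underline{V}(Y)+2\underline{C}(X,Y)$; (3) $\underline{V}\left(\frac{X+Y}{2}\right)-\overline{V}\left(\frac{X-Y}{2}\right)\le\underline{C}(X,Y)\le\overline{C}(X,Y)\le\overline{V}\left(\frac{X+Y}{2}\right)-\underline{V}\left(\frac{X-Y}{2}\right)$; (4) $|\overline{C}(X,Y)|\le\sqrt{\overline{V}(X)\overline{V}(Y)}$.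
   Context: For a random variable $W$ with $\hat{\mathbb{E}}[W^2]<\infty$: $\overline{\mu}_W=\hat{\mathbb{E}}[W]$, $\underline{\mu}_W=-\hat{\mathbb{E}}[-W]$, $M_W=[\underline{\mu}_W,\overline{\mu}_W]$. Upper variance $\overline{V}(W)=\min_{\mu\in M_W}\hat{\mathbb{E}}[(W-\mu)^2]$, lower variance $\underline{V}(W)=\min_{\mu\in M_W}\left(-\hat{\mathbb{E}}[-(W-\mu)^2]\right)$. Upper covariance $\overline{C}(X,Y)=\max_{\mu_2\in M_Y}\min_{\mu_1\in M_X}\hat{\mathbb{E}}[(X-\mu_1)(Y-\mu_2)]$; lower covariance $\underline{C}(X,Y)=\min_{\mu_2\in M_Y}\max_{\mu_1\in M_X}\left(-\hat{\mathbb{E}}[-(X-\mu_1)(Y-\mu_2)]\right)$. *)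

theory Defs
  imports "HOL-Probability.Probability"
begin

definition upper_exp :: "'a measure set \<Rightarrow> ('a \<Rightarrow> real) \<Rightarrow> real" where
  "upper_exp Ps Z = (SUP P\<in>Ps. integral\<^sup>L P Z)"

definition upper_mean :: "'a measure set \<Rightarrow> ('a \<Rightarrow> real) \<Rightarrow> real" where
  "upper_mean Ps W = upper_exp Ps W"

definition lower_mean :: "'a measure set \<Rightarrow> ('a \<Rightarrow> real) \<Rightarrow> real" where
  "lower_mean Ps W = - upper_exp Ps (\<lambda>\<omega>. - W \<omega>)"

definition mean_interval :: "'a measure set \<Rightarrow> ('a \<Rightarrow> real) \<Rightarrow> real set" where
  "mean_interval Ps W = {lower_mean Ps W .. upper_mean Ps W}"

definition upper_var :: "'a measure set \<Rightarrow> ('a \<Rightarrow> real) \<Rightarrow> real" where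
  "upper_var Ps W = (INF \<mu>\<in>mean_interval Ps W. upper_exp Ps (\<lambda>\<omega>. (W \<omega> - \<mu>)\<^sup>2))"

definition lower_var :: "'a measure set \<Rightarrow> ('a \<Rightarrow> real) \<Rightarrow> real" where
  "lower_var Ps W = (INF \<mu>\<in>mean_interval Ps W. - upper_exp Ps (\<lambda>\<omega>. - (W \<omega> - \<mu>)\<^sup>2))"

definition upper_cov :: "'a measure set \<Rightarrow> ('a \<Rightarrow> real) \<Rightarrow> ('a \<Rightarrow> real) \<Rightarrow> real" where
  "upper_cov Ps X Y = (SUP \<mu>2\<in>mean_interval Ps Y. INF \<mu>1\<in>mean_interval Ps X.
      upper_exp Ps (\<lambda>\<omega>. (X \<omega> - \<mu>1) * (Y \<omega> - \<mu>2)))"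

definition lower_cov :: "'a measure set \<Rightarrow> ('a \<Rightarrow> real) \<Rightarrow> ('a \<Rightarrow> real) \<Rightarrow> real" where
  "lower_cov Ps X Y = (INF \<mu>2\<in>mean_interval Ps Y. SUP \<mu>1\<in>mean_interval Ps X.
      - upper_exp Ps (\<lambda>\<omega>. - ((X \<omega> - \<mu>1) * (Y \<omega> - \<mu>2))))"

end

theory Submission
  imports Defs
begin

text \<open>For a single measure \<open>P\<close> everything is governed by the first two moments of \<open>X\<close> and \<open>Y\<close>,
  via \<open>E\<^sub>P[(W - \<mu>)\<^sup>2] = Var\<^sub>P W + (E\<^sub>P W - \<mu>)\<^sup>2\<close> and its bilinear analogue. The sublinear
  quantities are controlled by two-point mixtures \<open>t P + (1 - t) Q\<close> of members of the family: the
  upper variance (covariance) is the supremum of the variances (covariances) under such mixtures,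
  the lower variance is the infimum of the \<open>Var\<^sub>P\<close>, and the lower covariance lies between the
  infimum of the mixture covariances and every \<open>Cov\<^sub>P\<close>. The optimal centring \<open>\<mu>\<close> is found by a
  one-dimensional Helly argument, the bound for each mixture guaranteeing that the admissible sets
  of \<open>\<mu>\<close> intersect pairwise. Since the mixture covariance is bilinear and positive semidefinite,
  (1)-(4) then reduce to the corresponding identities and the Cauchy-Schwarz inequality for it.\<close>

lemma common_point_between_bounds:
  fixes l u :: "'i \<Rightarrow> real"
  assumes "lo \<le> hi"
    and "\<And>i. i \<in> I \<Longrightarrow> l i \<le> hi" and "\<And>j. j \<in> J \<Longrightarrow> lo \<le> u j"
    and "\<And>i j. i \<in> I \<Longrightarrow> j \<in> J \<Longrightarrow> l i \<le> u j"
  shows "\<exists>\<mu>\<in>{lo..hi}. (\<forall>i\<in>I. l i \<le> \<mu>) \<and> (\<forall>j\<in>J. \<mu> \<le> u j)"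
proof -
  define \<mu> where "\<mu> = Sup (insert lo (l ` I))"
  have bdd: "bdd_above (insert lo (l ` I))"
    using assms(1,2) by (intro bdd_aboveI[of _ hi]) auto
  have "lo \<le> \<mu>" "\<forall>i\<in>I. l i \<le> \<mu>"
    unfolding \<mu>_def using bdd by (auto intro: cSup_upper)
  moreover have "\<mu> \<le> hi" "\<forall>j\<in>J. \<mu> \<le> u j"
    unfolding \<mu>_def using assms by (auto intro!: cSup_least)
  ultimately show ?thesis by auto
qed

lemma abs_le_add_if_mixture_bound:
  fixes a b d :: real
  assumes "0 \<le> a" "0 \<le> b"
    and mix: "\<And>t. 0 \<le> t \<Longrightarrow> t \<le> 1 \<Longrightarrow> t * (1 - t) * d\<^sup>2 \<le> t * a\<^sup>2 + (1 - t) * b\<^sup>2"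
  shows "\<bar>d\<bar> \<le> a + b"
proof (rule ccontr)
  define D where "D = \<bar>d\<bar>"
  assume "\<not> \<bar>d\<bar> \<le> a + b"
  then have D: "a + b < D" "0 < D" using assms(1,2) by (auto simp: D_def)
  have "a\<^sup>2 < D\<^sup>2" "b\<^sup>2 < D\<^sup>2"
    using power_strict_mono[of a D 2] power_strict_mono[of b D 2] D assms(1,2) by auto
  \<comment> \<open>the maximiser of \<open>t * (1 - t) * D\<^sup>2 - t * a\<^sup>2 - (1 - t) * b\<^sup>2\<close>\<close>
  define t where "t = (D\<^sup>2 - a\<^sup>2 + b\<^sup>2) / (2 * D\<^sup>2)"
  have t: "0 \<le> t" "t \<le> 1"
    unfolding t_def using \<open>a\<^sup>2 < D\<^sup>2\<close> \<open>b\<^sup>2 < D\<^sup>2\<close> D(2)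
    by (auto simp: field_simps intro: add_increasing2 less_imp_le)
  have "t * (1 - t) * D\<^sup>2 - (t * a\<^sup>2 + (1 - t) * b\<^sup>2)
      = ((D - b)\<^sup>2 - a\<^sup>2) * ((D + b)\<^sup>2 - a\<^sup>2) / (4 * D\<^sup>2)"
    unfolding t_def using D(2) by (simp add: field_simps power2_eq_square)
  also have "\<dots> > 0"
    using power_strict_mono[of a "D - b" 2] power_strict_mono[of a "D + b" 2] D assms(1,2) by simp
  finally show False using mix[OF t] by (simp add: D_def)
qed

lemma le_add_divide_if_mixture_bound:
  fixes p q d r s :: real
  assumes "0 < p" "0 < q"
    and mix: "\<And>t. 0 \<le> t \<Longrightarrow> t \<le> 1 \<Longrightarrow> t * (1 - t) * d * (p + q) \<le> t * r + (1 - t) * s"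
  shows "d \<le> r / p + s / q"
proof -
  define t where "t = q / (p + q)"
  have t: "0 \<le> t" "t \<le> 1" "t * (p + q) = q" "(1 - t) * (p + q) = p"
    unfolding t_def using assms(1,2) by (auto simp: field_simps)
  have "p * q * d = (t * (p + q)) * ((1 - t) * (p + q)) * d"
    by (simp only: t(3,4)) simp
  also have "\<dots> = (p + q) * (t * (1 - t) * d * (p + q))"
    by (simp add: algebra_simps)
  also have "\<dots> \<le> (p + q) * (t * r + (1 - t) * s)"
    using mix[OF t(1,2)] assms(1,2) by (intro mult_left_mono) auto
  also have "\<dots> = (t * (p + q)) * r + ((1 - t) * (p + q)) * s"
    by (simp add: algebra_simps)
  finally have "p * q * d \<le> q * r + p * s"
    by (simp only: t(3,4))
  then show ?thesis
    using assms(1,2) by (simp add: field_simps)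
qed

lemma cauchy_schwarz_if_nonneg_quadratic_form:
  fixes v w c :: real
  assumes nonneg: "\<And>x y. 0 \<le> x\<^sup>2 * v + 2 * x * y * c + y\<^sup>2 * w"
  shows "c\<^sup>2 \<le> v * w"
proof (cases "v = 0")
  case True
  have "c = 0"
  proof (rule ccontr)
    assume "c \<noteq> 0"
    have "0 \<le> 2 * (- (w + 1) / (2 * c)) * c + w"
      using nonneg[of "- (w + 1) / (2 * c)" 1] True by simp
    also have "\<dots> = -1" using \<open>c \<noteq> 0\<close> by (simp add: field_simps)
    finally show False by simp
  qed
  then show ?thesis using True by simp
next
  case False
  with nonneg[of 1 0] have "0 < v" by simp
  have "0 \<le> v * (v * w - c\<^sup>2)"
    using nonneg[of c "- v"] by (simp add: power2_eq_square algebra_simps)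
  then show ?thesis using \<open>0 < v\<close> by (simp add: zero_le_mult_iff)
qed

lemma bdd_image_if_abs_le:
  fixes f :: "'i \<Rightarrow> real"
  assumes "\<And>x. x \<in> A \<Longrightarrow> \<bar>f x\<bar> \<le> K"
  shows "bdd_above (f ` A)" "bdd_below (f ` A)"
proof -
  have "f x \<le> K" if "x \<in> A" for x
    using abs_le_D1[OF assms[OF that]] .
  then show "bdd_above (f ` A)" by (rule bdd_aboveI2)
  have "- K \<le> f x" if "x \<in> A" for x
    using abs_le_D2[OF assms[OF that]] by linarith
  then show "bdd_below (f ` A)" by (rule bdd_belowI2)
qed

lemma abs_cSUP_le:
  fixes f :: "'i \<Rightarrow> real"
  assumes "A \<noteq> {}" "\<And>x. x \<in> A \<Longrightarrow> \<bar>f x\<bar> \<le> K"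
  shows "\<bar>SUP x\<in>A. f x\<bar> \<le> K"
proof -
  obtain x where x: "x \<in> A" using assms(1) by blast
  have "bdd_above (f ` A)" using assms(2) by (rule bdd_image_if_abs_le)
  with x have "f x \<le> (SUP x\<in>A. f x)" by (rule cSUP_upper)
  moreover have "(SUP x\<in>A. f x) \<le> K"
    using assms(1) by (rule cSUP_least) (use abs_le_D1[OF assms(2)] in blast)
  ultimately show ?thesis using abs_le_D2[OF assms(2)[OF x]] by linarith
qed

lemma abs_cINF_le:
  fixes f :: "'i \<Rightarrow> real"
  assumes "A \<noteq> {}" "\<And>x. x \<in> A \<Longrightarrow> \<bar>f x\<bar> \<le> K"
  shows "\<bar>INF x\<in>A. f x\<bar> \<le> K"
proof -
  obtain x where x: "x \<in> A" using assms(1) by blast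
  have "bdd_below (f ` A)" using assms(2) by (rule bdd_image_if_abs_le)
  then have "(INF x\<in>A. f x) \<le> f x" using x by (rule cINF_lower)
  moreover have "- K \<le> f y" if "y \<in> A" for y
    using abs_le_D2[OF assms(2)[OF that]] by linarith
  then have "- K \<le> (INF x\<in>A. f x)"
    using assms(1) by (intro cINF_greatest)
  ultimately show ?thesis using abs_le_D1[OF assms(2)[OF x]] by linarith
qed

text \<open>One-dimensional Helly arguments: for each \<open>i\<close> the admissible \<open>\<mu>\<close> form an interval (resp. a
  half-line or the whole line), the mixture hypothesis makes any two of them intersect, and
  pairwise intersecting intervals of the real line have a common point.\<close>

lemma exists_point_within_mixture_bound:
  fixes m v :: "'i \<Rightarrow> real"
  assumes "lo \<le> hi" and m: "\<And>i. i \<in> I \<Longrightarrow> m i \<in> {lo..hi}"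
    and mix: "\<And>i j t. i \<in> I \<Longrightarrow> j \<in> I \<Longrightarrow> 0 \<le> t \<Longrightarrow> t \<le> 1 \<Longrightarrow>
      t * v i + (1 - t) * v j + t * (1 - t) * (m i - m j)\<^sup>2 \<le> K"
  shows "\<exists>\<mu>\<in>{lo..hi}. \<forall>i\<in>I. v i + (m i - \<mu>)\<^sup>2 \<le> K"
proof -
  define r where "r i = sqrt (K - v i)" for i
  have "v i \<le> K" if "i \<in> I" for i
    using mix[OF that that, of 1] by simp
  then have r: "0 \<le> r i" "(r i)\<^sup>2 = K - v i" if "i \<in> I" for i
    using that by (simp_all add: r_def)
  have "\<bar>m i - m j\<bar> \<le> r i + r j" if "i \<in> I" "j \<in> I" for i j
  proof (rule abs_le_add_if_mixture_bound)
    fix t :: real assume t: "0 \<le> t" "t \<le> 1"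
    show "t * (1 - t) * (m i - m j)\<^sup>2 \<le> t * (r i)\<^sup>2 + (1 - t) * (r j)\<^sup>2"
      unfolding r(2)[OF that(1)] r(2)[OF that(2)] using mix[OF that t] by (simp add: algebra_simps)
  qed (use r that in auto)
  then obtain \<mu> where "\<mu> \<in> {lo..hi}" and \<mu>: "\<forall>i\<in>I. m i - r i \<le> \<mu> \<and> \<mu> \<le> m i + r i"
    using common_point_between_bounds[of lo hi I "\<lambda>i. m i - r i" I "\<lambda>i. m i + r i"] assms(1) m r
    by (fastforce simp: abs_le_iff)
  have "v i + (m i - \<mu>)\<^sup>2 \<le> K" if "i \<in> I" for i
  proof -
    have "(m i - \<mu>)\<^sup>2 \<le> (r i)\<^sup>2"
      using \<mu> that r(1)[OF that] by (intro power2_le_iff_abs_le[THEN iffD2]) auto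
    then show ?thesis using r(2)[OF that] by simp
  qed
  with \<open>\<mu> \<in> {lo..hi}\<close> show ?thesis by blast
qed

lemma exists_point_within_product_bound:
  fixes a b c :: "'i \<Rightarrow> real"
  assumes "lo \<le> hi" and a: "\<And>i. i \<in> I \<Longrightarrow> a i \<in> {lo..hi}"
    and mix: "\<And>i j t. i \<in> I \<Longrightarrow> j \<in> I \<Longrightarrow> 0 \<le> t \<Longrightarrow> t \<le> 1 \<Longrightarrow>
      t * c i + (1 - t) * c j + t * (1 - t) * (a i - a j) * (b i - b j) \<le> K"
  shows "\<exists>\<mu>\<in>{lo..hi}. \<forall>i\<in>I. c i + (a i - \<mu>) * b i \<le> K"
proof -
  define l where "l i = a i - (K - c i) / b i" for i
  have c_le: "c i \<le> K" if "i \<in> I" for i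
    using mix[OF that that, of 1] by simp
  have "l i \<le> l j" if "i \<in> I" "j \<in> I" "0 < b i" "b j < 0" for i j
  proof -
    have "a i - a j \<le> (K - c i) / b i + (K - c j) / - b j"
    proof (rule le_add_divide_if_mixture_bound)
      fix t :: real assume "0 \<le> t" "t \<le> 1"
      then show "t * (1 - t) * (a i - a j) * (b i + - b j) \<le> t * (K - c i) + (1 - t) * (K - c j)"
        using mix[OF that(1,2)] by (simp add: algebra_simps)
    qed (use that in auto)
    then show ?thesis by (simp add: l_def)
  qed
  moreover have "l i \<le> hi" if "i \<in> I" "0 < b i" for i
  proof -
    have "0 \<le> (K - c i) / b i" using c_le[OF that(1)] that(2) by simp
    then show ?thesis using a[OF that(1)] by (simp add: l_def)
  qed
  moreover have "lo \<le> l j" if "j \<in> I" "b j < 0" for j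
  proof -
    have "(K - c j) / b j \<le> 0" using c_le[OF that(1)] that(2) by (simp add: divide_nonneg_neg)
    then show ?thesis using a[OF that(1)] by (simp add: l_def)
  qed
  ultimately obtain \<mu> where "\<mu> \<in> {lo..hi}"
    and lower: "\<forall>i\<in>{i\<in>I. 0 < b i}. l i \<le> \<mu>" and upper: "\<forall>j\<in>{j\<in>I. b j < 0}. \<mu> \<le> l j"
    using common_point_between_bounds[of lo hi "{i\<in>I. 0 < b i}" l "{j\<in>I. b j < 0}" l] assms(1)
    by auto
  have "c i + (a i - \<mu>) * b i \<le> K" if "i \<in> I" for i
  proof (cases "0 < b i" "b i < 0" rule: case_split[case_product case_split])
    case (True_False)
    then show ?thesis using lower that by (auto simp: l_def field_simps)
  next
    case (False_True)
    then show ?thesis using upper that by (auto simp: l_def field_simps)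
  qed (use c_le[OF that] in auto)
  with \<open>\<mu> \<in> {lo..hi}\<close> show ?thesis by blast
qed

definition cov :: "'a measure \<Rightarrow> ('a \<Rightarrow> real) \<Rightarrow> ('a \<Rightarrow> real) \<Rightarrow> real" where
  "cov P V W = integral\<^sup>L P (\<lambda>\<omega>. V \<omega> * W \<omega>) - integral\<^sup>L P V * integral\<^sup>L P W"

text \<open>The covariance of \<open>V\<close> and \<open>W\<close> under the mixture \<open>t P + (1 - t) Q\<close>, written in terms of
  moments under \<open>P\<close> and \<open>Q\<close> so that the mixture measure never has to be built.\<close>

definition mix_cov :: "'a measure \<Rightarrow> 'a measure \<Rightarrow> real \<Rightarrow> ('a \<Rightarrow> real) \<Rightarrow> ('a \<Rightarrow> real) \<Rightarrow> real" where
  "mix_cov P Q t V W = t * cov P V W + (1 - t) * cov Q V W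
     + t * (1 - t) * (integral\<^sup>L P V - integral\<^sup>L Q V) * (integral\<^sup>L P W - integral\<^sup>L Q W)"

lemma cov_commute: "cov P V W = cov P W V"
  unfolding cov_def by (simp add: mult.commute)

lemma cov_self_le_second_moment: "cov P W W \<le> integral\<^sup>L P (\<lambda>\<omega>. (W \<omega>)\<^sup>2)"
  by (simp add: cov_def power2_eq_square)

lemma mix_cov_commute: "mix_cov P Q t V W = mix_cov P Q t W V"
  unfolding mix_cov_def by (simp add: cov_commute mult.commute mult.left_commute)

lemma mix_cov_one [simp]: "mix_cov P Q 1 V W = cov P V W"
  unfolding mix_cov_def by simp

lemma mix_cov_self_ge:
  assumes "0 \<le> t" "t \<le> 1" "L \<le> cov P W W" "L \<le> cov Q W W"
  shows "L \<le> mix_cov P Q t W W"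
proof -
  have "t * L + (1 - t) * L \<le> t * cov P W W + (1 - t) * cov Q W W"
    using assms by (intro add_mono mult_left_mono) auto
  moreover have "0 \<le> t * (1 - t) * (integral\<^sup>L P W - integral\<^sup>L Q W)\<^sup>2"
    using assms(1,2) by simp
  ultimately show ?thesis by (simp add: mix_cov_def power2_eq_square algebra_simps)
qed

locale prob_family =
  fixes M :: "'a measure" and Ps :: "'a measure set"
  assumes Ps_nonempty: "Ps \<noteq> {}"
    and Ps_prob: "\<And>P. P \<in> Ps \<Longrightarrow> prob_space P \<and> sets P = sets M"
begin

definition finite_second_moment :: "('a \<Rightarrow> real) \<Rightarrow> bool" where
  "finite_second_moment W \<longleftrightarrow> W \<in> borel_measurable M
     \<and> (\<forall>P\<in>Ps. integrable P (\<lambda>\<omega>. (W \<omega>)\<^sup>2))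
     \<and> bdd_above ((\<lambda>P. integral\<^sup>L P (\<lambda>\<omega>. (W \<omega>)\<^sup>2)) ` Ps)"

lemma borel_measurable_family_member:
  assumes "P \<in> Ps" "W \<in> borel_measurable M"
  shows "W \<in> borel_measurable P"
proof -
  have sets: "sets P = sets M" using Ps_prob[OF assms(1)] by simp
  show ?thesis using assms(2) by (simp add: measurable_cong_sets[OF sets refl])
qed

lemma integrable_of_finite_second_moment:
  assumes "finite_second_moment W" "P \<in> Ps"
  shows "integrable P W" "integrable P (\<lambda>\<omega>. (W \<omega>)\<^sup>2)"
proof -
  interpret prob_space P using Ps_prob[OF assms(2)] by simp
  show "integrable P (\<lambda>\<omega>. (W \<omega>)\<^sup>2)" using assms unfolding finite_second_moment_def by blast
  then show "integrable P W"
    using assms borel_measurable_family_member unfolding finite_second_moment_def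
    by (blast intro: square_integrable_imp_integrable)
qed

lemma integrable_mult_of_finite_second_moment:
  assumes "finite_second_moment V" "finite_second_moment W" "P \<in> Ps"
  shows "integrable P (\<lambda>\<omega>. V \<omega> * W \<omega>)"
proof (rule Bochner_Integration.integrable_bound)
  show "integrable P (\<lambda>\<omega>. (V \<omega>)\<^sup>2 + (W \<omega>)\<^sup>2)"
    using assms integrable_of_finite_second_moment by simp
  show "(\<lambda>\<omega>. V \<omega> * W \<omega>) \<in> borel_measurable P"
    using assms borel_measurable_family_member unfolding finite_second_moment_def
    by (intro borel_measurable_times) auto
  show "AE \<omega> in P. norm (V \<omega> * W \<omega>) \<le> norm ((V \<omega>)\<^sup>2 + (W \<omega>)\<^sup>2)"
  proof (rule AE_I2)
    fix \<omega>
    have "2 * \<bar>V \<omega>\<bar> * \<bar>W \<omega>\<bar> \<le> (V \<omega>)\<^sup>2 + (W \<omega>)\<^sup>2"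
      using sum_squares_bound[of "\<bar>V \<omega>\<bar>" "\<bar>W \<omega>\<bar>"] by simp
    moreover have "0 \<le> \<bar>V \<omega>\<bar> * \<bar>W \<omega>\<bar>" by simp
    ultimately have "\<bar>V \<omega>\<bar> * \<bar>W \<omega>\<bar> \<le> (V \<omega>)\<^sup>2 + (W \<omega>)\<^sup>2" by linarith
    then show "norm (V \<omega> * W \<omega>) \<le> norm ((V \<omega>)\<^sup>2 + (W \<omega>)\<^sup>2)" by (simp add: abs_mult)
  qed
qed

lemma second_moment_le_upper_exp:
  assumes "finite_second_moment W" "P \<in> Ps"
  shows "integral\<^sup>L P (\<lambda>\<omega>. (W \<omega>)\<^sup>2) \<le> upper_exp Ps (\<lambda>\<omega>. (W \<omega>)\<^sup>2)"
  using assms unfolding finite_second_moment_def upper_exp_def by (intro cSUP_upper) auto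

lemma finite_second_moment_lin_comb:
  assumes V: "finite_second_moment V" and W: "finite_second_moment W"
  shows "finite_second_moment (\<lambda>\<omega>. a * V \<omega> + b * W \<omega>)"
proof -
  have expand: "(\<lambda>\<omega>. (a * V \<omega> + b * W \<omega>)\<^sup>2)
      = (\<lambda>\<omega>. a\<^sup>2 * (V \<omega>)\<^sup>2 + (2 * a * b) * (V \<omega> * W \<omega>) + b\<^sup>2 * (W \<omega>)\<^sup>2)"
    by (simp add: fun_eq_iff power2_eq_square algebra_simps)
  have int: "integrable P (\<lambda>\<omega>. (a * V \<omega> + b * W \<omega>)\<^sup>2)" if "P \<in> Ps" for P
    unfolding expand using integrable_of_finite_second_moment[OF V that]
      integrable_of_finite_second_moment[OF W that] integrable_mult_of_finite_second_moment[OF V W that]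
    by simp
  define SV where "SV = upper_exp Ps (\<lambda>\<omega>. (V \<omega>)\<^sup>2)"
  define SW where "SW = upper_exp Ps (\<lambda>\<omega>. (W \<omega>)\<^sup>2)"
  have bound: "integral\<^sup>L P (\<lambda>\<omega>. (a * V \<omega> + b * W \<omega>)\<^sup>2) \<le> 2 * a\<^sup>2 * SV + 2 * b\<^sup>2 * SW"
    if P: "P \<in> Ps" for P
  proof -
    have "integral\<^sup>L P (\<lambda>\<omega>. (a * V \<omega> + b * W \<omega>)\<^sup>2)
        \<le> integral\<^sup>L P (\<lambda>\<omega>. 2 * a\<^sup>2 * (V \<omega>)\<^sup>2 + 2 * b\<^sup>2 * (W \<omega>)\<^sup>2)"
    proof (rule integral_mono)
      fix \<omega>
      have "0 \<le> (a * V \<omega> - b * W \<omega>)\<^sup>2" by simp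
      then show "(a * V \<omega> + b * W \<omega>)\<^sup>2 \<le> 2 * a\<^sup>2 * (V \<omega>)\<^sup>2 + 2 * b\<^sup>2 * (W \<omega>)\<^sup>2"
        by (simp add: power2_eq_square algebra_simps)
    qed (use int[OF P] integrable_of_finite_second_moment[OF V P] integrable_of_finite_second_moment[OF W P] in simp_all)
    also have "\<dots> = 2 * a\<^sup>2 * integral\<^sup>L P (\<lambda>\<omega>. (V \<omega>)\<^sup>2) + 2 * b\<^sup>2 * integral\<^sup>L P (\<lambda>\<omega>. (W \<omega>)\<^sup>2)"
      using integrable_of_finite_second_moment[OF V P] integrable_of_finite_second_moment[OF W P] by simp
    also have "\<dots> \<le> 2 * a\<^sup>2 * SV + 2 * b\<^sup>2 * SW"
      using second_moment_le_upper_exp[OF V P] second_moment_le_upper_exp[OF W P]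
      by (intro add_mono mult_left_mono) (auto simp: SV_def SW_def)
    finally show ?thesis .
  qed
  then have "bdd_above ((\<lambda>P. integral\<^sup>L P (\<lambda>\<omega>. (a * V \<omega> + b * W \<omega>)\<^sup>2)) ` Ps)"
    by (intro bdd_aboveI2)
  moreover have "(\<lambda>\<omega>. a * V \<omega> + b * W \<omega>) \<in> borel_measurable M"
    using V W unfolding finite_second_moment_def by (intro borel_measurable_add borel_measurable_times) auto
  ultimately show ?thesis
    unfolding finite_second_moment_def using int by blast
qed

lemma integral_centered_product:
  assumes V: "finite_second_moment V" and W: "finite_second_moment W" and P: "P \<in> Ps"
  shows "integral\<^sup>L P (\<lambda>\<omega>. (V \<omega> - \<mu>1) * (W \<omega> - \<mu>2))
    = cov P V W + (integral\<^sup>L P V - \<mu>1) * (integral\<^sup>L P W - \<mu>2)"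
proof -
  interpret prob_space P using Ps_prob[OF P] by simp
  have "(\<lambda>\<omega>. (V \<omega> - \<mu>1) * (W \<omega> - \<mu>2)) = (\<lambda>\<omega>. V \<omega> * W \<omega> - \<mu>2 * V \<omega> - \<mu>1 * W \<omega> + \<mu>1 * \<mu>2)"
    by (simp add: fun_eq_iff algebra_simps)
  then show ?thesis
    using integrable_of_finite_second_moment[OF V P] integrable_of_finite_second_moment[OF W P]
      integrable_mult_of_finite_second_moment[OF V W P]
    by (simp add: cov_def prob_space algebra_simps)
qed

lemma cov_self_nonneg:
  assumes "finite_second_moment W" "P \<in> Ps"
  shows "0 \<le> cov P W W"
proof -
  have "0 \<le> integral\<^sup>L P (\<lambda>\<omega>. (W \<omega> - integral\<^sup>L P W) * (W \<omega> - integral\<^sup>L P W))"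
    by (rule integral_nonneg_AE) simp
  then show ?thesis using integral_centered_product[OF assms(1,1,2)] by simp
qed

lemma cov_lin_comb_left:
  assumes V: "finite_second_moment V" and W: "finite_second_moment W" and U: "finite_second_moment U"
    and P: "P \<in> Ps"
  shows "cov P (\<lambda>\<omega>. a * V \<omega> + b * W \<omega>) U = a * cov P V U + b * cov P W U"
proof -
  have "(\<lambda>\<omega>. (a * V \<omega> + b * W \<omega>) * U \<omega>) = (\<lambda>\<omega>. a * (V \<omega> * U \<omega>) + b * (W \<omega> * U \<omega>))"
    by (simp add: fun_eq_iff algebra_simps)
  then show ?thesis
    using integrable_of_finite_second_moment[OF V P] integrable_of_finite_second_moment[OF W P]
      integrable_mult_of_finite_second_moment[OF V U P] integrable_mult_of_finite_second_moment[OF W U P]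
    by (simp add: cov_def algebra_simps)
qed

lemma mix_cov_lin_comb_left:
  assumes "finite_second_moment V" "finite_second_moment W" "finite_second_moment U"
    and "P \<in> Ps" "Q \<in> Ps"
  shows "mix_cov P Q t (\<lambda>\<omega>. a * V \<omega> + b * W \<omega>) U = a * mix_cov P Q t V U + b * mix_cov P Q t W U"
  using assms integrable_of_finite_second_moment[OF assms(1)] integrable_of_finite_second_moment[OF assms(2)]
  by (simp add: mix_cov_def cov_lin_comb_left algebra_simps)

lemma mix_cov_lin_comb_right:
  assumes "finite_second_moment V" "finite_second_moment W" "finite_second_moment U"
    and "P \<in> Ps" "Q \<in> Ps"
  shows "mix_cov P Q t U (\<lambda>\<omega>. a * V \<omega> + b * W \<omega>) = a * mix_cov P Q t U V + b * mix_cov P Q t U W"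
  using mix_cov_lin_comb_left[OF assms] by (simp add: mix_cov_commute[of P Q t U])

lemma mix_cov_lin_comb_self:
  assumes "finite_second_moment V" "finite_second_moment W" "P \<in> Ps" "Q \<in> Ps"
  shows "mix_cov P Q t (\<lambda>\<omega>. a * V \<omega> + b * W \<omega>) (\<lambda>\<omega>. a * V \<omega> + b * W \<omega>)
    = a\<^sup>2 * mix_cov P Q t V V + 2 * a * b * mix_cov P Q t V W + b\<^sup>2 * mix_cov P Q t W W"
  using assms finite_second_moment_lin_comb[OF assms(1,2)] mix_cov_commute[of P Q t W V]
  by (simp add: mix_cov_lin_comb_left mix_cov_lin_comb_right power2_eq_square algebra_simps)

lemma mix_cov_cauchy_schwarz:
  assumes V: "finite_second_moment V" and W: "finite_second_moment W"
    and "P \<in> Ps" "Q \<in> Ps" "0 \<le> t" "t \<le> 1"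
  shows "(mix_cov P Q t V W)\<^sup>2 \<le> mix_cov P Q t V V * mix_cov P Q t W W"
proof (rule cauchy_schwarz_if_nonneg_quadratic_form)
  fix x y :: real
  let ?Z = "\<lambda>\<omega>. x * V \<omega> + y * W \<omega>"
  have Z: "finite_second_moment ?Z" by (rule finite_second_moment_lin_comb[OF V W])
  have "0 \<le> mix_cov P Q t ?Z ?Z"
    using assms cov_self_nonneg[OF Z] by (intro mix_cov_self_ge) auto
  also have "\<dots> = x\<^sup>2 * mix_cov P Q t V V + 2 * x * y * mix_cov P Q t V W + y\<^sup>2 * mix_cov P Q t W W"
    using assms by (intro mix_cov_lin_comb_self)
  finally show "0 \<le> x\<^sup>2 * mix_cov P Q t V V + 2 * x * y * mix_cov P Q t V W + y\<^sup>2 * mix_cov P Q t W W" .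
qed

lemma abs_upper_exp_le:
  assumes "\<And>P. P \<in> Ps \<Longrightarrow> \<bar>integral\<^sup>L P f\<bar> \<le> K"
  shows "\<bar>upper_exp Ps f\<bar> \<le> K"
  unfolding upper_exp_def using Ps_nonempty assms by (rule abs_cSUP_le)

lemma integral_le_upper_exp:
  assumes "\<And>P. P \<in> Ps \<Longrightarrow> \<bar>integral\<^sup>L P f\<bar> \<le> K" and "P \<in> Ps"
  shows "integral\<^sup>L P f \<le> upper_exp Ps f"
  unfolding upper_exp_def using assms by (intro cSUP_upper bdd_image_if_abs_le(1))

lemma abs_mean_le_sqrt_second_moment:
  assumes W: "finite_second_moment W" and P: "P \<in> Ps"
  shows "\<bar>integral\<^sup>L P W\<bar> \<le> sqrt (upper_exp Ps (\<lambda>\<omega>. (W \<omega>)\<^sup>2))"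
proof -
  have "(integral\<^sup>L P W)\<^sup>2 \<le> upper_exp Ps (\<lambda>\<omega>. (W \<omega>)\<^sup>2)"
    using cov_self_nonneg[OF W P] second_moment_le_upper_exp[OF W P] by (simp add: cov_def power2_eq_square)
  then show ?thesis using real_le_rsqrt by fastforce
qed

lemma mean_mem_mean_interval:
  assumes W: "finite_second_moment W" and P: "P \<in> Ps"
  shows "integral\<^sup>L P W \<in> mean_interval Ps W"
proof -
  note B = abs_mean_le_sqrt_second_moment[OF W]
  have "integral\<^sup>L P W \<le> upper_exp Ps W"
    using B P by (rule integral_le_upper_exp)
  moreover have "integral\<^sup>L P (\<lambda>\<omega>. - W \<omega>) \<le> upper_exp Ps (\<lambda>\<omega>. - W \<omega>)"
    using B P by (intro integral_le_upper_exp) auto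
  ultimately show ?thesis
    by (simp add: mean_interval_def lower_mean_def upper_mean_def)
qed

lemma mean_interval_nonempty:
  assumes "finite_second_moment W"
  shows "mean_interval Ps W \<noteq> {}"
  using mean_mem_mean_interval[OF assms] Ps_nonempty by blast

lemma mix_mean_mem_mean_interval:
  assumes "finite_second_moment W" "P \<in> Ps" "Q \<in> Ps" "0 \<le> t" "t \<le> 1"
  shows "t * integral\<^sup>L P W + (1 - t) * integral\<^sup>L Q W \<in> mean_interval Ps W"
  using convexD[of "mean_interval Ps W" "integral\<^sup>L P W" "integral\<^sup>L Q W" t "1 - t"]
    mean_mem_mean_interval assms
  by (simp add: mean_interval_def)

lemma lower_mean_le_upper_mean:
  assumes "finite_second_moment W"
  shows "lower_mean Ps W \<le> upper_mean Ps W"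
  using mean_mem_mean_interval[OF assms] Ps_nonempty by (fastforce simp: mean_interval_def)

lemma integral_squared_deviation:
  assumes "finite_second_moment W" "P \<in> Ps"
  shows "integral\<^sup>L P (\<lambda>\<omega>. (W \<omega> - \<mu>)\<^sup>2) = cov P W W + (integral\<^sup>L P W - \<mu>)\<^sup>2"
  using integral_centered_product[OF assms(1,1,2), of \<mu> \<mu>] by (simp add: power2_eq_square)

lemma bdd_above_squared_deviation:
  assumes W: "finite_second_moment W"
  shows "bdd_above ((\<lambda>P. integral\<^sup>L P (\<lambda>\<omega>. (W \<omega> - \<mu>)\<^sup>2)) ` Ps)"
proof -
  define S where "S = upper_exp Ps (\<lambda>\<omega>. (W \<omega>)\<^sup>2)"
  define B where "B = sqrt S"
  have "integral\<^sup>L P (\<lambda>\<omega>. (W \<omega> - \<mu>)\<^sup>2) \<le> S + (B + \<bar>\<mu>\<bar>)\<^sup>2" if P: "P \<in> Ps" for P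
  proof -
    have "\<bar>integral\<^sup>L P W - \<mu>\<bar> \<le> B + \<bar>\<mu>\<bar>"
      using abs_mean_le_sqrt_second_moment[OF W P] by (simp add: B_def S_def)
    then have "(integral\<^sup>L P W - \<mu>)\<^sup>2 \<le> (B + \<bar>\<mu>\<bar>)\<^sup>2"
      using power_mono[OF _ abs_ge_zero, of _ _ 2] by fastforce
    then show ?thesis
      using integral_squared_deviation[OF W P, of \<mu>] cov_self_le_second_moment[of P W]
        second_moment_le_upper_exp[OF W P, folded S_def] by linarith
  qed
  then show ?thesis by (intro bdd_aboveI2)
qed

lemma mix_var_le_upper_var:
  assumes W: "finite_second_moment W" and PQ: "P \<in> Ps" "Q \<in> Ps" and t: "0 \<le> t" "t \<le> 1"
  shows "mix_cov P Q t W W \<le> upper_var Ps W"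
  unfolding upper_var_def
proof (rule cINF_greatest)
  show "mean_interval Ps W \<noteq> {}" by (rule mean_interval_nonempty[OF W])
next
  fix \<mu>
  let ?D = "\<lambda>P. integral\<^sup>L P (\<lambda>\<omega>. (W \<omega> - \<mu>)\<^sup>2)"
  have "t * ?D P + (1 - t) * ?D Q
      = mix_cov P Q t W W + (t * integral\<^sup>L P W + (1 - t) * integral\<^sup>L Q W - \<mu>)\<^sup>2"
    unfolding integral_squared_deviation[OF W PQ(1)] integral_squared_deviation[OF W PQ(2)]
    by (simp add: mix_cov_def power2_eq_square algebra_simps)
  then have "mix_cov P Q t W W \<le> t * ?D P + (1 - t) * ?D Q"
    by (metis le_add_same_cancel1 zero_le_power2)
  also have "\<dots> \<le> (SUP P\<in>Ps. ?D P)"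
    using PQ t bdd_above_squared_deviation[OF W] by (intro convex_bound_le cSUP_upper) auto
  finally show "mix_cov P Q t W W \<le> upper_exp Ps (\<lambda>\<omega>. (W \<omega> - \<mu>)\<^sup>2)"
    by (simp add: upper_exp_def)
qed

lemma upper_var_le:
  assumes W: "finite_second_moment W"
    and mix: "\<And>P Q t. P \<in> Ps \<Longrightarrow> Q \<in> Ps \<Longrightarrow> 0 \<le> t \<Longrightarrow> t \<le> 1 \<Longrightarrow> mix_cov P Q t W W \<le> K"
  shows "upper_var Ps W \<le> K"
proof -
  have mix': "t * cov P W W + (1 - t) * cov Q W W + t * (1 - t) * (integral\<^sup>L P W - integral\<^sup>L Q W)\<^sup>2 \<le> K"
    if "P \<in> Ps" "Q \<in> Ps" "0 \<le> t" "t \<le> 1" for P Q t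
    using mix[OF that] by (simp add: mix_cov_def power2_eq_square)
  have "\<exists>\<mu>\<in>{lower_mean Ps W..upper_mean Ps W}. \<forall>P\<in>Ps. cov P W W + (integral\<^sup>L P W - \<mu>)\<^sup>2 \<le> K"
    by (rule exists_point_within_mixture_bound[OF lower_mean_le_upper_mean[OF W] _ mix'])
      (use mean_mem_mean_interval[OF W] in \<open>simp add: mean_interval_def\<close>)
  then obtain \<mu> where \<mu>: "\<mu> \<in> mean_interval Ps W"
    and close: "\<And>P. P \<in> Ps \<Longrightarrow> cov P W W + (integral\<^sup>L P W - \<mu>)\<^sup>2 \<le> K"
    unfolding mean_interval_def by blast
  obtain P0 where P0: "P0 \<in> Ps" using Ps_nonempty by blast
  have "0 \<le> upper_exp Ps (\<lambda>\<omega>. (W \<omega> - \<mu>')\<^sup>2)" for \<mu>'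
  proof -
    have "0 \<le> integral\<^sup>L P0 (\<lambda>\<omega>. (W \<omega> - \<mu>')\<^sup>2)" by (rule integral_nonneg_AE) simp
    also have "\<dots> \<le> upper_exp Ps (\<lambda>\<omega>. (W \<omega> - \<mu>')\<^sup>2)"
      unfolding upper_exp_def using P0 bdd_above_squared_deviation[OF W] by (rule cSUP_upper)
    finally show ?thesis .
  qed
  then have "upper_var Ps W \<le> upper_exp Ps (\<lambda>\<omega>. (W \<omega> - \<mu>)\<^sup>2)"
    unfolding upper_var_def using \<mu> by (intro cINF_lower bdd_belowI2) auto
  also have "\<dots> \<le> K"
    unfolding upper_exp_def using Ps_nonempty close integral_squared_deviation[OF W] by (intro cSUP_least) auto
  finally show ?thesis .
qed

lemma lower_var_le_var:
  assumes W: "finite_second_moment W" and P: "P \<in> Ps"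
  shows "lower_var Ps W \<le> cov P W W"
proof -
  have SUP_nonpos: "(SUP Q\<in>Ps. integral\<^sup>L Q (\<lambda>\<omega>. - (W \<omega> - \<mu>)\<^sup>2)) \<le> 0" for \<mu>
    using Ps_nonempty by (intro cSUP_least) (auto intro!: integral_nonneg_AE)
  let ?m = "integral\<^sup>L P W"
  have "lower_var Ps W \<le> - upper_exp Ps (\<lambda>\<omega>. - (W \<omega> - ?m)\<^sup>2)"
    unfolding lower_var_def using mean_mem_mean_interval[OF W P] SUP_nonpos
    by (intro cINF_lower bdd_belowI2[of _ 0]) (auto simp: upper_exp_def)
  also have "\<dots> \<le> integral\<^sup>L P (\<lambda>\<omega>. (W \<omega> - ?m)\<^sup>2)"
  proof -
    have "integral\<^sup>L P (\<lambda>\<omega>. - (W \<omega> - ?m)\<^sup>2) \<le> upper_exp Ps (\<lambda>\<omega>. - (W \<omega> - ?m)\<^sup>2)"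
      unfolding upper_exp_def using P SUP_nonpos
      by (intro cSUP_upper bdd_aboveI2[of _ _ 0]) (auto intro!: integral_nonneg_AE)
    then show ?thesis by simp
  qed
  also have "\<dots> = cov P W W" using integral_squared_deviation[OF W P] by simp
  finally show ?thesis .
qed

lemma le_lower_var:
  assumes W: "finite_second_moment W" and var: "\<And>P. P \<in> Ps \<Longrightarrow> L \<le> cov P W W"
  shows "L \<le> lower_var Ps W"
  unfolding lower_var_def
proof (rule cINF_greatest)
  show "mean_interval Ps W \<noteq> {}" by (rule mean_interval_nonempty[OF W])
next
  fix \<mu>
  have "integral\<^sup>L P (\<lambda>\<omega>. - (W \<omega> - \<mu>)\<^sup>2) \<le> - L" if P: "P \<in> Ps" for P
  proof -
    have "integral\<^sup>L P (\<lambda>\<omega>. - (W \<omega> - \<mu>)\<^sup>2) = - (cov P W W + (integral\<^sup>L P W - \<mu>)\<^sup>2)"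
      using integral_squared_deviation[OF W P] by simp
    then show ?thesis using var[OF P] zero_le_power2[of "integral\<^sup>L P W - \<mu>"] by linarith
  qed
  then have "upper_exp Ps (\<lambda>\<omega>. - (W \<omega> - \<mu>)\<^sup>2) \<le> - L"
    unfolding upper_exp_def using Ps_nonempty by (intro cSUP_least)
  then show "L \<le> - upper_exp Ps (\<lambda>\<omega>. - (W \<omega> - \<mu>)\<^sup>2)" by linarith
qed

end

locale finite_second_moment_pair = prob_family +
  fixes X Y :: "'a \<Rightarrow> real"
  assumes X: "finite_second_moment X" and Y: "finite_second_moment Y"
begin

text \<open>Sup and Inf of unbounded sets of reals are junk values; this uniform bound on
  \<open>E\<^sub>P[(X - \<mu>1) (Y - \<mu>2)]\<close> ensures that all nested extrema in \<^const>\<open>upper_cov\<close> and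
  \<^const>\<open>lower_cov\<close> are taken over bounded sets.\<close>

definition centered_product_bound :: real where
  "centered_product_bound = sqrt (upper_exp Ps (\<lambda>\<omega>. (X \<omega>)\<^sup>2) * upper_exp Ps (\<lambda>\<omega>. (Y \<omega>)\<^sup>2))
     + (upper_mean Ps X - lower_mean Ps X) * (upper_mean Ps Y - lower_mean Ps Y)"

lemma abs_integral_centered_product_le:
  assumes P: "P \<in> Ps" and \<mu>: "\<mu>1 \<in> mean_interval Ps X" "\<mu>2 \<in> mean_interval Ps Y"
  shows "\<bar>integral\<^sup>L P (\<lambda>\<omega>. (X \<omega> - \<mu>1) * (Y \<omega> - \<mu>2))\<bar> \<le> centered_product_bound"
proof -
  have "(cov P X Y)\<^sup>2 \<le> cov P X X * cov P Y Y"
    using mix_cov_cauchy_schwarz[OF X Y P P, of 1] by simp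
  also have "\<dots> \<le> upper_exp Ps (\<lambda>\<omega>. (X \<omega>)\<^sup>2) * upper_exp Ps (\<lambda>\<omega>. (Y \<omega>)\<^sup>2)"
    using cov_self_nonneg[OF X P] cov_self_nonneg[OF Y P]
      second_moment_le_upper_exp[OF X P] second_moment_le_upper_exp[OF Y P]
      cov_self_le_second_moment[of P X] cov_self_le_second_moment[of P Y]
    by (intro mult_mono) auto
  finally have "\<bar>cov P X Y\<bar> \<le> sqrt (upper_exp Ps (\<lambda>\<omega>. (X \<omega>)\<^sup>2) * upper_exp Ps (\<lambda>\<omega>. (Y \<omega>)\<^sup>2))"
    using real_le_rsqrt by fastforce
  moreover have "\<bar>integral\<^sup>L P X - \<mu>1\<bar> \<le> upper_mean Ps X - lower_mean Ps X"
    and "\<bar>integral\<^sup>L P Y - \<mu>2\<bar> \<le> upper_mean Ps Y - lower_mean Ps Y"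
    using mean_mem_mean_interval[OF X P] mean_mem_mean_interval[OF Y P] \<mu>
    by (auto simp: mean_interval_def)
  then have "\<bar>(integral\<^sup>L P X - \<mu>1) * (integral\<^sup>L P Y - \<mu>2)\<bar>
      \<le> (upper_mean Ps X - lower_mean Ps X) * (upper_mean Ps Y - lower_mean Ps Y)"
    unfolding abs_mult by (intro mult_mono) auto
  ultimately show ?thesis
    unfolding integral_centered_product[OF X Y P] centered_product_bound_def by linarith
qed

lemma abs_upper_exp_centered_product_le:
  assumes "\<mu>1 \<in> mean_interval Ps X" "\<mu>2 \<in> mean_interval Ps Y"
  shows "\<bar>upper_exp Ps (\<lambda>\<omega>. (X \<omega> - \<mu>1) * (Y \<omega> - \<mu>2))\<bar> \<le> centered_product_bound"
    and "\<bar>upper_exp Ps (\<lambda>\<omega>. - ((X \<omega> - \<mu>1) * (Y \<omega> - \<mu>2)))\<bar> \<le> centered_product_bound"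
  using abs_integral_centered_product_le[OF _ assms] by (auto intro!: abs_upper_exp_le)

lemma integral_le_upper_exp_centered_product:
  assumes "P \<in> Ps" "\<mu>1 \<in> mean_interval Ps X" "\<mu>2 \<in> mean_interval Ps Y"
  shows "integral\<^sup>L P (\<lambda>\<omega>. (X \<omega> - \<mu>1) * (Y \<omega> - \<mu>2))
      \<le> upper_exp Ps (\<lambda>\<omega>. (X \<omega> - \<mu>1) * (Y \<omega> - \<mu>2))"
    and "integral\<^sup>L P (\<lambda>\<omega>. - ((X \<omega> - \<mu>1) * (Y \<omega> - \<mu>2)))
      \<le> upper_exp Ps (\<lambda>\<omega>. - ((X \<omega> - \<mu>1) * (Y \<omega> - \<mu>2)))"
proof -
  note bound = abs_integral_centered_product_le[OF _ assms(2,3)]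
  show "integral\<^sup>L P (\<lambda>\<omega>. (X \<omega> - \<mu>1) * (Y \<omega> - \<mu>2))
      \<le> upper_exp Ps (\<lambda>\<omega>. (X \<omega> - \<mu>1) * (Y \<omega> - \<mu>2))"
    using bound assms(1) by (rule integral_le_upper_exp)
  show "integral\<^sup>L P (\<lambda>\<omega>. - ((X \<omega> - \<mu>1) * (Y \<omega> - \<mu>2)))
      \<le> upper_exp Ps (\<lambda>\<omega>. - ((X \<omega> - \<mu>1) * (Y \<omega> - \<mu>2)))"
    using assms(1) by (intro integral_le_upper_exp[where K = centered_product_bound]) (simp_all add: bound)
qed

lemma mix_cov_le_upper_cov:
  assumes PQ: "P \<in> Ps" "Q \<in> Ps" and t: "0 \<le> t" "t \<le> 1"
  shows "mix_cov P Q t X Y \<le> upper_cov Ps X Y"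
proof -
  let ?C = "\<lambda>\<mu>1 \<mu>2. upper_exp Ps (\<lambda>\<omega>. (X \<omega> - \<mu>1) * (Y \<omega> - \<mu>2))"
  \<comment> \<open>centring \<open>Y\<close> at its mixture mean turns \<open>mix_cov\<close> into a mixture of expectations\<close>
  define \<mu>2 where "\<mu>2 = t * integral\<^sup>L P Y + (1 - t) * integral\<^sup>L Q Y"
  have \<mu>2: "\<mu>2 \<in> mean_interval Ps Y"
    unfolding \<mu>2_def using mix_mean_mem_mean_interval[OF Y PQ t] .
  have "mix_cov P Q t X Y \<le> ?C \<mu>1 \<mu>2" if \<mu>1: "\<mu>1 \<in> mean_interval Ps X" for \<mu>1
  proof -
    have "mix_cov P Q t X Y
        = t * integral\<^sup>L P (\<lambda>\<omega>. (X \<omega> - \<mu>1) * (Y \<omega> - \<mu>2))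
          + (1 - t) * integral\<^sup>L Q (\<lambda>\<omega>. (X \<omega> - \<mu>1) * (Y \<omega> - \<mu>2))"
      unfolding integral_centered_product[OF X Y PQ(1)] integral_centered_product[OF X Y PQ(2)]
      by (simp add: mix_cov_def \<mu>2_def algebra_simps)
    also have "\<dots> \<le> ?C \<mu>1 \<mu>2"
      using integral_le_upper_exp_centered_product(1)[OF _ \<mu>1 \<mu>2] PQ t by (intro convex_bound_le) auto
    finally show ?thesis .
  qed
  then have "mix_cov P Q t X Y \<le> (INF \<mu>1\<in>mean_interval Ps X. ?C \<mu>1 \<mu>2)"
    using mean_interval_nonempty[OF X] by (intro cINF_greatest) auto
  also have "\<dots> \<le> upper_cov Ps X Y"
    unfolding upper_cov_def using \<mu>2
  proof (rule cSUP_upper)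
    have "\<bar>INF \<mu>1\<in>mean_interval Ps X. ?C \<mu>1 \<mu>'\<bar> \<le> centered_product_bound"
      if "\<mu>' \<in> mean_interval Ps Y" for \<mu>'
      using mean_interval_nonempty[OF X] abs_upper_exp_centered_product_le(1) that by (intro abs_cINF_le) auto
    then show "bdd_above ((\<lambda>\<mu>'. INF \<mu>1\<in>mean_interval Ps X. ?C \<mu>1 \<mu>') ` mean_interval Ps Y)"
      by (rule bdd_image_if_abs_le)
  qed
  finally show ?thesis .
qed

lemma upper_cov_le:
  assumes mix: "\<And>P Q t. P \<in> Ps \<Longrightarrow> Q \<in> Ps \<Longrightarrow> 0 \<le> t \<Longrightarrow> t \<le> 1 \<Longrightarrow> mix_cov P Q t X Y \<le> K"
  shows "upper_cov Ps X Y \<le> K"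
  unfolding upper_cov_def
proof (rule cSUP_least[OF mean_interval_nonempty[OF Y]])
  fix \<mu>2 assume \<mu>2: "\<mu>2 \<in> mean_interval Ps Y"
  let ?C = "\<lambda>\<mu>1. upper_exp Ps (\<lambda>\<omega>. (X \<omega> - \<mu>1) * (Y \<omega> - \<mu>2))"
  have mix': "t * cov P X Y + (1 - t) * cov Q X Y
      + t * (1 - t) * (integral\<^sup>L P X - integral\<^sup>L Q X) * ((integral\<^sup>L P Y - \<mu>2) - (integral\<^sup>L Q Y - \<mu>2))
      \<le> K" if "P \<in> Ps" "Q \<in> Ps" "0 \<le> t" "t \<le> 1" for P Q t
    using mix[OF that] by (simp add: mix_cov_def)
  have "\<exists>\<mu>1\<in>{lower_mean Ps X..upper_mean Ps X}. \<forall>P\<in>Ps.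
      cov P X Y + (integral\<^sup>L P X - \<mu>1) * (integral\<^sup>L P Y - \<mu>2) \<le> K"
    by (rule exists_point_within_product_bound[OF lower_mean_le_upper_mean[OF X] _ mix'])
      (use mean_mem_mean_interval[OF X] in \<open>simp add: mean_interval_def\<close>)
  then obtain \<mu>1 where \<mu>1: "\<mu>1 \<in> mean_interval Ps X"
    and close: "\<And>P. P \<in> Ps \<Longrightarrow> cov P X Y + (integral\<^sup>L P X - \<mu>1) * (integral\<^sup>L P Y - \<mu>2) \<le> K"
    unfolding mean_interval_def by blast
  have "(INF \<mu>\<in>mean_interval Ps X. ?C \<mu>) \<le> ?C \<mu>1"
    using abs_upper_exp_centered_product_le(1)[OF _ \<mu>2] \<mu>1
    by (intro cINF_lower bdd_image_if_abs_le(2))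
  also have "\<dots> \<le> K"
    unfolding upper_exp_def using close
    by (intro cSUP_least[OF Ps_nonempty]) (simp add: integral_centered_product[OF X Y])
  finally show "(INF \<mu>\<in>mean_interval Ps X. ?C \<mu>) \<le> K" .
qed

lemma lower_cov_le_cov:
  assumes P: "P \<in> Ps"
  shows "lower_cov Ps X Y \<le> cov P X Y"
proof -
  let ?G = "\<lambda>\<mu>1 \<mu>2. - upper_exp Ps (\<lambda>\<omega>. - ((X \<omega> - \<mu>1) * (Y \<omega> - \<mu>2)))"
  let ?m = "integral\<^sup>L P Y"
  have m: "?m \<in> mean_interval Ps Y" by (rule mean_mem_mean_interval[OF Y P])
  have "\<bar>SUP \<mu>1\<in>mean_interval Ps X. ?G \<mu>1 \<mu>2\<bar> \<le> centered_product_bound"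
    if "\<mu>2 \<in> mean_interval Ps Y" for \<mu>2
    using mean_interval_nonempty[OF X] abs_upper_exp_centered_product_le(2) that by (intro abs_cSUP_le) auto
  then have "lower_cov Ps X Y \<le> (SUP \<mu>1\<in>mean_interval Ps X. ?G \<mu>1 ?m)"
    unfolding lower_cov_def using m by (intro cINF_lower bdd_image_if_abs_le(2))
  also have "\<dots> \<le> cov P X Y"
  proof (rule cSUP_least[OF mean_interval_nonempty[OF X]])
    fix \<mu>1 assume \<mu>1: "\<mu>1 \<in> mean_interval Ps X"
    show "?G \<mu>1 ?m \<le> cov P X Y"
      using integral_le_upper_exp_centered_product(2)[OF P \<mu>1 m]
      by (simp add: integral_centered_product[OF X Y P])
  qed
  finally show ?thesis .
qed

lemma le_lower_cov:
  assumes mix: "\<And>P Q t. P \<in> Ps \<Longrightarrow> Q \<in> Ps \<Longrightarrow> 0 \<le> t \<Longrightarrow> t \<le> 1 \<Longrightarrow> k \<le> mix_cov P Q t X Y"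
  shows "k \<le> lower_cov Ps X Y"
  unfolding lower_cov_def
proof (rule cINF_greatest[OF mean_interval_nonempty[OF Y]])
  fix \<mu>2 assume \<mu>2: "\<mu>2 \<in> mean_interval Ps Y"
  let ?G = "\<lambda>\<mu>1. - upper_exp Ps (\<lambda>\<omega>. - ((X \<omega> - \<mu>1) * (Y \<omega> - \<mu>2)))"
  have mix': "t * - cov P X Y + (1 - t) * - cov Q X Y
      + t * (1 - t) * (integral\<^sup>L P X - integral\<^sup>L Q X) * ((\<mu>2 - integral\<^sup>L P Y) - (\<mu>2 - integral\<^sup>L Q Y))
      \<le> - k" if "P \<in> Ps" "Q \<in> Ps" "0 \<le> t" "t \<le> 1" for P Q t
    using mix[OF that] by (simp add: mix_cov_def algebra_simps)
  have "\<exists>\<mu>1\<in>{lower_mean Ps X..upper_mean Ps X}. \<forall>P\<in>Ps.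
      - cov P X Y + (integral\<^sup>L P X - \<mu>1) * (\<mu>2 - integral\<^sup>L P Y) \<le> - k"
    by (rule exists_point_within_product_bound[OF lower_mean_le_upper_mean[OF X] _ mix'])
      (use mean_mem_mean_interval[OF X] in \<open>simp add: mean_interval_def\<close>)
  then obtain \<mu>1 where \<mu>1: "\<mu>1 \<in> mean_interval Ps X"
    and close: "\<And>P. P \<in> Ps \<Longrightarrow> - cov P X Y + (integral\<^sup>L P X - \<mu>1) * (\<mu>2 - integral\<^sup>L P Y) \<le> - k"
    unfolding mean_interval_def by blast
  have "upper_exp Ps (\<lambda>\<omega>. - ((X \<omega> - \<mu>1) * (Y \<omega> - \<mu>2))) \<le> - k"
    unfolding upper_exp_def
  proof (rule cSUP_least[OF Ps_nonempty])
    fix P assume P: "P \<in> Ps"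
    have "k \<le> integral\<^sup>L P (\<lambda>\<omega>. (X \<omega> - \<mu>1) * (Y \<omega> - \<mu>2))"
      unfolding integral_centered_product[OF X Y P] using close[OF P] by (simp add: algebra_simps)
    then show "integral\<^sup>L P (\<lambda>\<omega>. - ((X \<omega> - \<mu>1) * (Y \<omega> - \<mu>2))) \<le> - k" by simp
  qed
  then have "k \<le> ?G \<mu>1" by simp
  also have "\<dots> \<le> (SUP \<mu>\<in>mean_interval Ps X. ?G \<mu>)"
    using \<mu>1 abs_upper_exp_centered_product_le(2)[OF _ \<mu>2]
    by (intro cSUP_upper bdd_image_if_abs_le(1)) simp_all
  finally show "k \<le> (SUP \<mu>\<in>mean_interval Ps X. ?G \<mu>)" .
qed

lemma
  shows sum_eq_lin_comb: "(\<lambda>\<omega>. X \<omega> + Y \<omega>) = (\<lambda>\<omega>. 1 * X \<omega> + 1 * Y \<omega>)"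
    and half_sum_eq_lin_comb: "(\<lambda>\<omega>. (X \<omega> + Y \<omega>) / 2) = (\<lambda>\<omega>. (1/2) * X \<omega> + (1/2) * Y \<omega>)"
    and half_diff_eq_lin_comb: "(\<lambda>\<omega>. (X \<omega> - Y \<omega>) / 2) = (\<lambda>\<omega>. (1/2) * X \<omega> + (- 1/2) * Y \<omega>)"
  by (simp_all add: fun_eq_iff field_simps)

lemma finite_second_moment_half_sum_diff:
  shows "finite_second_moment (\<lambda>\<omega>. (X \<omega> + Y \<omega>) / 2)"
    and "finite_second_moment (\<lambda>\<omega>. (X \<omega> - Y \<omega>) / 2)"
  unfolding half_sum_eq_lin_comb half_diff_eq_lin_comb by (rule finite_second_moment_lin_comb[OF X Y])+

lemma upper_var_add_le:
  "upper_var Ps (\<lambda>\<omega>. X \<omega> + Y \<omega>) \<le> upper_var Ps X + upper_var Ps Y + 2 * upper_cov Ps X Y"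
  unfolding sum_eq_lin_comb
proof (rule upper_var_le[OF finite_second_moment_lin_comb[OF X Y]])
  fix P Q and t :: real assume PQ: "P \<in> Ps" "Q \<in> Ps" and t: "0 \<le> t" "t \<le> 1"
  show "mix_cov P Q t (\<lambda>\<omega>. 1 * X \<omega> + 1 * Y \<omega>) (\<lambda>\<omega>. 1 * X \<omega> + 1 * Y \<omega>)
      \<le> upper_var Ps X + upper_var Ps Y + 2 * upper_cov Ps X Y"
    unfolding mix_cov_lin_comb_self[OF X Y PQ]
    using mix_var_le_upper_var[OF X PQ t] mix_var_le_upper_var[OF Y PQ t] mix_cov_le_upper_cov[OF PQ t]
    by simp
qed

lemma lower_var_add_ge:
  "lower_var Ps X + lower_var Ps Y + 2 * lower_cov Ps X Y \<le> lower_var Ps (\<lambda>\<omega>. X \<omega> + Y \<omega>)"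
  unfolding sum_eq_lin_comb
proof (rule le_lower_var[OF finite_second_moment_lin_comb[OF X Y]])
  fix P assume P: "P \<in> Ps"
  show "lower_var Ps X + lower_var Ps Y + 2 * lower_cov Ps X Y
      \<le> cov P (\<lambda>\<omega>. 1 * X \<omega> + 1 * Y \<omega>) (\<lambda>\<omega>. 1 * X \<omega> + 1 * Y \<omega>)"
    using mix_cov_lin_comb_self[OF X Y P P, of 1 1 1]
      lower_var_le_var[OF X P] lower_var_le_var[OF Y P] lower_cov_le_cov[OF P]
    by simp
qed

lemma mix_cov_eq_half_sum_minus_half_diff:
  assumes "P \<in> Ps" "Q \<in> Ps"
  shows "mix_cov P Q t X Y
    = mix_cov P Q t (\<lambda>\<omega>. (X \<omega> + Y \<omega>) / 2) (\<lambda>\<omega>. (X \<omega> + Y \<omega>) / 2)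
      - mix_cov P Q t (\<lambda>\<omega>. (X \<omega> - Y \<omega>) / 2) (\<lambda>\<omega>. (X \<omega> - Y \<omega>) / 2)"
  unfolding half_sum_eq_lin_comb half_diff_eq_lin_comb mix_cov_lin_comb_self[OF X Y assms]
  by (simp add: power2_eq_square)

lemma var_diff_le_lower_cov:
  "lower_var Ps (\<lambda>\<omega>. (X \<omega> + Y \<omega>) / 2) - upper_var Ps (\<lambda>\<omega>. (X \<omega> - Y \<omega>) / 2) \<le> lower_cov Ps X Y"
proof (rule le_lower_cov)
  fix P Q and t :: real assume PQ: "P \<in> Ps" "Q \<in> Ps" and t: "0 \<le> t" "t \<le> 1"
  note H = finite_second_moment_half_sum_diff(1) and D = finite_second_moment_half_sum_diff(2)
  have "lower_var Ps (\<lambda>\<omega>. (X \<omega> + Y \<omega>) / 2)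
      \<le> mix_cov P Q t (\<lambda>\<omega>. (X \<omega> + Y \<omega>) / 2) (\<lambda>\<omega>. (X \<omega> + Y \<omega>) / 2)"
    using t lower_var_le_var[OF H PQ(1)] lower_var_le_var[OF H PQ(2)] by (rule mix_cov_self_ge)
  moreover have "mix_cov P Q t (\<lambda>\<omega>. (X \<omega> - Y \<omega>) / 2) (\<lambda>\<omega>. (X \<omega> - Y \<omega>) / 2)
      \<le> upper_var Ps (\<lambda>\<omega>. (X \<omega> - Y \<omega>) / 2)"
    using D PQ t by (rule mix_var_le_upper_var)
  ultimately show "lower_var Ps (\<lambda>\<omega>. (X \<omega> + Y \<omega>) / 2) - upper_var Ps (\<lambda>\<omega>. (X \<omega> - Y \<omega>) / 2)
      \<le> mix_cov P Q t X Y"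
    unfolding mix_cov_eq_half_sum_minus_half_diff[OF PQ] by linarith
qed

lemma upper_cov_le_var_diff:
  "upper_cov Ps X Y \<le> upper_var Ps (\<lambda>\<omega>. (X \<omega> + Y \<omega>) / 2) - lower_var Ps (\<lambda>\<omega>. (X \<omega> - Y \<omega>) / 2)"
proof (rule upper_cov_le)
  fix P Q and t :: real assume PQ: "P \<in> Ps" "Q \<in> Ps" and t: "0 \<le> t" "t \<le> 1"
  note H = finite_second_moment_half_sum_diff(1) and D = finite_second_moment_half_sum_diff(2)
  have "mix_cov P Q t (\<lambda>\<omega>. (X \<omega> + Y \<omega>) / 2) (\<lambda>\<omega>. (X \<omega> + Y \<omega>) / 2)
      \<le> upper_var Ps (\<lambda>\<omega>. (X \<omega> + Y \<omega>) / 2)"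
    using H PQ t by (rule mix_var_le_upper_var)
  moreover have "lower_var Ps (\<lambda>\<omega>. (X \<omega> - Y \<omega>) / 2)
      \<le> mix_cov P Q t (\<lambda>\<omega>. (X \<omega> - Y \<omega>) / 2) (\<lambda>\<omega>. (X \<omega> - Y \<omega>) / 2)"
    using t lower_var_le_var[OF D PQ(1)] lower_var_le_var[OF D PQ(2)] by (rule mix_cov_self_ge)
  ultimately show "mix_cov P Q t X Y
      \<le> upper_var Ps (\<lambda>\<omega>. (X \<omega> + Y \<omega>) / 2) - lower_var Ps (\<lambda>\<omega>. (X \<omega> - Y \<omega>) / 2)"
    unfolding mix_cov_eq_half_sum_minus_half_diff[OF PQ] by linarith
qed

lemma lower_cov_le_upper_cov: "lower_cov Ps X Y \<le> upper_cov Ps X Y"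
proof -
  obtain P where P: "P \<in> Ps" using Ps_nonempty by blast
  show ?thesis
    using lower_cov_le_cov[OF P] mix_cov_le_upper_cov[OF P P, of 1] by simp
qed

lemma abs_mix_cov_le_sqrt_upper_var:
  assumes PQ: "P \<in> Ps" "Q \<in> Ps" and t: "0 \<le> t" "t \<le> 1"
  shows "\<bar>mix_cov P Q t X Y\<bar> \<le> sqrt (upper_var Ps X * upper_var Ps Y)"
proof -
  have "(mix_cov P Q t X Y)\<^sup>2 \<le> mix_cov P Q t X X * mix_cov P Q t Y Y"
    using X Y PQ t by (rule mix_cov_cauchy_schwarz)
  also have "\<dots> \<le> upper_var Ps X * upper_var Ps Y"
    using mix_var_le_upper_var[OF X PQ t] mix_var_le_upper_var[OF Y PQ t]
      mix_cov_self_ge[OF t, of 0 P X Q] mix_cov_self_ge[OF t, of 0 P Y Q]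
      cov_self_nonneg[OF X] cov_self_nonneg[OF Y] PQ
    by (intro mult_mono) auto
  finally show ?thesis using real_le_rsqrt by fastforce
qed

lemma abs_upper_cov_le_sqrt_upper_var:
  "\<bar>upper_cov Ps X Y\<bar> \<le> sqrt (upper_var Ps X * upper_var Ps Y)"
proof -
  obtain P where P: "P \<in> Ps" using Ps_nonempty by blast
  have "upper_cov Ps X Y \<le> sqrt (upper_var Ps X * upper_var Ps Y)"
    using abs_mix_cov_le_sqrt_upper_var by (intro upper_cov_le) (simp add: abs_le_iff)
  moreover have "- sqrt (upper_var Ps X * upper_var Ps Y) \<le> upper_cov Ps X Y"
    using abs_mix_cov_le_sqrt_upper_var[OF P P, of 1] mix_cov_le_upper_cov[OF P P, of 1] by simp
  ultimately show ?thesis by linarith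
qed

end

theorem proposition3p8:
  fixes M :: "'a measure" and Ps :: "'a measure set" and X Y :: "'a \<Rightarrow> real"
  assumes Ps_ne: "Ps \<noteq> {}"
    and Ps_prob: "\<And>P. P \<in> Ps \<Longrightarrow> prob_space P \<and> sets P = sets M"
    and X_meas: "X \<in> borel_measurable M"
    and Y_meas: "Y \<in> borel_measurable M"
    and X2_int: "\<And>P. P \<in> Ps \<Longrightarrow> integrable P (\<lambda>\<omega>. (X \<omega>)\<^sup>2)"
    and Y2_int: "\<And>P. P \<in> Ps \<Longrightarrow> integrable P (\<lambda>\<omega>. (Y \<omega>)\<^sup>2)"
    and X2_bdd: "bdd_above ((\<lambda>P. integral\<^sup>L P (\<lambda>\<omega>. (X \<omega>)\<^sup>2)) ` Ps)"
    and Y2_bdd: "bdd_above ((\<lambda>P. integral\<^sup>L P (\<lambda>\<omega>. (Y \<omega>)\<^sup>2)) ` Ps)"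
  shows "upper_var Ps (\<lambda>\<omega>. X \<omega> + Y \<omega>)
           \<le> upper_var Ps X + upper_var Ps Y + 2 * upper_cov Ps X Y
       \<and> lower_var Ps (\<lambda>\<omega>. X \<omega> + Y \<omega>)
           \<ge> lower_var Ps X + lower_var Ps Y + 2 * lower_cov Ps X Y
       \<and> lower_var Ps (\<lambda>\<omega>. (X \<omega> + Y \<omega>) / 2) - upper_var Ps (\<lambda>\<omega>. (X \<omega> - Y \<omega>) / 2)
           \<le> lower_cov Ps X Y
       \<and> lower_cov Ps X Y \<le> upper_cov Ps X Y
       \<and> upper_cov Ps X Y
           \<le> upper_var Ps (\<lambda>\<omega>. (X \<omega> + Y \<omega>) / 2) - lower_var Ps (\<lambda>\<omega>. (X \<omega> - Y \<omega>) / 2)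
       \<and> \<bar>upper_cov Ps X Y\<bar> \<le> sqrt (upper_var Ps X * upper_var Ps Y)"
proof -
  interpret prob_family M Ps
    using Ps_ne Ps_prob by unfold_locales
  interpret finite_second_moment_pair M Ps X Y
    using X_meas Y_meas X2_int Y2_int X2_bdd Y2_bdd
    by unfold_locales (simp_all add: finite_second_moment_def)
  show ?thesis
    using upper_var_add_le lower_var_add_ge var_diff_le_lower_cov lower_cov_le_upper_cov
      upper_cov_le_var_diff abs_upper_cov_le_sqrt_upper_var
    by simp
qed

end
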